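(* For rational $\delta>0$ let $e(\delta)$ be the least integer $e$ with $2^{-e}<\delta$. Let $g(m,\delta)=(m-1)e(\delta)+\frac{(m-1)m}{2}$, $\bar g(x,k,0)=x+k+1$, $\bar g(x,k,i+1)=g(\bar g(x,k,i),1/k)$, $h(\ell,m,\delta)=2^{\,e(\delta)\,\ell\,2^{5m}}$ and $\bar h(x,n,k)=h(2^x,n,1/k)\,k^{2^x}$. Let $k\ge1$ and $i\ge0$. If $X$ is a nonempty finite set with $|X|\ge\bar h(\min X,\bar g(\min X,k,i),k)$, then $X$ is $(\omega,k,i)$-superpersistent.
   Context: Strings are finite binary strings with $\preceq$ the initial-segment order; $2^i$ also denotes the set of strings of length $i$; a tree is a set of strings closed under initial segments; a leaf of a finite tree is a $\preceq$-maximal element. For finite $X=\{x_0<\dots<x_n\}$, a finite tree $T$ is $X$-quasistrong if $T\cap 2^{x_i}\ne\emptyset$ for all $i\le n$ and for each $i<n$ every $\sigma\in T\cap2^{x_i}$ has exactly two incompatible extensions in $T\cap 2^{x_{i+1}}$. $T$ is $(C,X)$-prehomogeneous if there is a color $c$ such that for all $i<n$, $\sigma\in T\cap 2^{x_i}$, $\tau\in T\cap 2^{x_{i+1}}$ with $\sigma\prec\tau$, some $\zeta\in T$ with $\sigma\preceq\zeta\preceq\tau$ has $C(\zeta)=c$. $X$ is $\omega$-large if $|X|>\min X$. Persistence ($k\ge1$, $X$ nonempty finite): $X$ is $(\omega,k,0)$-persistent iff $\omega$-large; for $i\ge1$, $X$ is $(\omega,k,i)$-persistent iff $X$ contains an $(\omega,k,i-1)$-persistent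 subset $Y$ such that for every $X$-quasistrong tree $T$ and every $C:T\cap 2^{\max X}\to k$ there exist $c<k$ and a $Y$-quasistrong finite tree $S\subseteq T$ all of whose leaves have extensions in $C^{-1}(c)$. Superpersistence: $X$ is $(\omega,k,i)$-superpersistent if for every family $\{T_\rho:\rho\in 2^{\min X}\}$ of $X$-quasistrong trees and every $C:2^{<\mathbb{N}}\to k$ there exist $Y\subseteq X$ and trees $S_\rho\subseteq T_\rho$ such that $Y$ is $(\omega,k,i)$-persistent and each $S_\rho$ is $Y$-quasistrong and $(C,Y)$-prehomogeneous. *)

theory Defs
  imports Complex_Main "HOL-Library.Sublist"
begin

(* Strings are bool lists; \<preceq> is Sublist.prefix; 2^n is {s. length s = n}. *)

definition level :: "bool list set \<Rightarrow> nat \<Rightarrow> bool list set" where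
  "level T n = {s \<in> T. length s = n}"

definition is_tree :: "bool list set \<Rightarrow> bool" where
  "is_tree T \<longleftrightarrow> (\<forall>t\<in>T. \<forall>s. prefix s t \<longrightarrow> s \<in> T)"

definition leaves :: "bool list set \<Rightarrow> bool list set" where
  "leaves T = {s \<in> T. \<not> (\<exists>t\<in>T. strict_prefix s t)}"

definition consec :: "nat set \<Rightarrow> nat \<Rightarrow> nat \<Rightarrow> bool" where
  "consec X x y \<longleftrightarrow> x \<in> X \<and> y \<in> X \<and> x < y \<and> \<not> (\<exists>z\<in>X. x < z \<and> z < y)"

definition quasistrong :: "nat set \<Rightarrow> bool list set \<Rightarrow> bool" where
  "quasistrong X T \<longleftrightarrow> finite T \<and> is_tree T \<and>
     (\<forall>x\<in>X. level T x \<noteq> {}) \<and>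
     (\<forall>x y. consec X x y \<longrightarrow>
        (\<forall>s\<in>level T x. \<exists>t1 t2. t1 \<in> level T y \<and> t2 \<in> level T y \<and>
            prefix s t1 \<and> prefix s t2 \<and> \<not> prefix t1 t2 \<and> \<not> prefix t2 t1 \<and>
            (\<forall>t\<in>level T y. prefix s t \<longrightarrow> t = t1 \<or> t = t2)))"

definition prehomogeneous :: "(bool list \<Rightarrow> nat) \<Rightarrow> nat set \<Rightarrow> bool list set \<Rightarrow> bool" where
  "prehomogeneous C X T \<longleftrightarrow> (\<exists>c. \<forall>x y. consec X x y \<longrightarrow>
     (\<forall>s\<in>level T x. \<forall>t\<in>level T y. prefix s t \<longrightarrow>
        (\<exists>z\<in>T. prefix s z \<and> prefix z t \<and> C z = c)))"

definition omega_large :: "nat set \<Rightarrow> bool" where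
  "omega_large X \<longleftrightarrow> card X > Min X"

fun persistent :: "nat \<Rightarrow> nat \<Rightarrow> nat set \<Rightarrow> bool" where
  "persistent k 0 X \<longleftrightarrow> finite X \<and> X \<noteq> {} \<and> omega_large X"
| "persistent k (Suc i) X \<longleftrightarrow> finite X \<and> X \<noteq> {} \<and>
     (\<exists>Y\<subseteq>X. persistent k i Y \<and>
        (\<forall>T. quasistrong X T \<longrightarrow>
          (\<forall>C :: bool list \<Rightarrow> nat. (\<forall>s\<in>level T (Max X). C s < k) \<longrightarrow>
            (\<exists>c<k. \<exists>S\<subseteq>T. quasistrong Y S \<and>
               (\<forall>l\<in>leaves S. \<exists>t\<in>level T (Max X). prefix l t \<and> C t = c)))))"

definition superpersistent :: "nat \<Rightarrow> nat \<Rightarrow> nat set \<Rightarrow> bool" where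
  "superpersistent k i X \<longleftrightarrow>
     (\<forall>T :: bool list \<Rightarrow> bool list set. \<forall>C :: bool list \<Rightarrow> nat.
        (\<forall>r. length r = Min X \<longrightarrow> quasistrong X (T r)) \<longrightarrow> (\<forall>s. C s < k) \<longrightarrow>
        (\<exists>Y\<subseteq>X. \<exists>S :: bool list \<Rightarrow> bool list set. persistent k i Y \<and>
           (\<forall>r. length r = Min X \<longrightarrow>
              S r \<subseteq> T r \<and> quasistrong Y (S r) \<and> prehomogeneous C Y (S r))))"

definition e_fn :: "rat \<Rightarrow> int" where
  "e_fn \<delta> = (THE e. (2::rat) powi (-e) < \<delta> \<and> (\<forall>e'. (2::rat) powi (-e') < \<delta> \<longrightarrow> e \<le> e'))"

definition g_fn :: "int \<Rightarrow> rat \<Rightarrow> int" where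
  "g_fn m \<delta> = (m - 1) * e_fn \<delta> + ((m - 1) * m) div 2"

fun gbar :: "nat \<Rightarrow> nat \<Rightarrow> nat \<Rightarrow> int" where
  "gbar x k 0 = int x + int k + 1"
| "gbar x k (Suc i) = g_fn (gbar x k i) (1 / of_nat k)"

definition h_fn :: "int \<Rightarrow> int \<Rightarrow> rat \<Rightarrow> rat" where
  "h_fn l m \<delta> = (2::rat) powi (e_fn \<delta> * l * 2 ^ nat (5 * m))"

definition hbar :: "nat \<Rightarrow> int \<Rightarrow> nat \<Rightarrow> rat" where
  "hbar x n k = h_fn (2 ^ x) n (1 / of_nat k) * (of_nat k) ^ (2 ^ x)"

end

theory Submission
  imports Defs "HOL-Library.FuncSet"
begin

section \<open>Cones in quasistrong trees\<close>

lemma prefix_length_eq: "prefix s t \<Longrightarrow> length s = length t \<Longrightarrow> s = t"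
  by (auto simp: prefix_def)

lemma prefixes_same_length_eq: "prefix s u \<Longrightarrow> prefix t u \<Longrightarrow> length s = length t \<Longrightarrow> s = t"
  by (metis prefix_same_cases prefix_length_eq)

lemma comparable_prefix:
  assumes "prefix w t \<or> prefix t w"
  shows comparable_prefix_above: "length t \<le> length w \<Longrightarrow> prefix t w"
    and comparable_prefix_below: "length w \<le> length t \<Longrightarrow> prefix w t"
  using assms prefix_length_le prefix_length_eq by (metis le_antisym)+

lemma quasistrong_finite: "quasistrong X T \<Longrightarrow> finite T"
  and quasistrong_tree: "quasistrong X T \<Longrightarrow> is_tree T"
  and quasistrong_level_nonempty: "quasistrong X T \<Longrightarrow> x \<in> X \<Longrightarrow> level T x \<noteq> {}"
  unfolding quasistrong_def by auto

definition cone :: "bool list set \<Rightarrow> bool list \<Rightarrow> nat \<Rightarrow> bool list set" where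
  "cone T s n = {t \<in> level T n. prefix s t}"

lemma mem_cone_iff: "t \<in> cone T s n \<longleftrightarrow> t \<in> T \<and> length t = n \<and> prefix s t"
  unfolding cone_def level_def by auto

lemma finite_cone: "finite T \<Longrightarrow> finite (cone T s n)"
  unfolding cone_def level_def by simp

lemma cone_self: "s \<in> level T n \<Longrightarrow> cone T s n = {s}"
  unfolding cone_def level_def by (auto intro: prefix_length_eq[symmetric])

lemma card_eq_2_iff_distinct_same_length:
  assumes "\<forall>t\<in>A. length t = n"
  shows "card A = 2 \<longleftrightarrow> (\<exists>t1 t2. A = {t1, t2} \<and> \<not> prefix t1 t2 \<and> \<not> prefix t2 t1)"
proof
  assume "card A = 2"
  then obtain t1 t2 where "A = {t1, t2}" "t1 \<noteq> t2"
    by (auto simp: card_2_iff)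
  with assms show "\<exists>t1 t2. A = {t1, t2} \<and> \<not> prefix t1 t2 \<and> \<not> prefix t2 t1"
    by (metis insertCI prefix_length_eq)
qed (auto simp: card_2_iff)

lemma quasistrong_iff_card_cone:
  "quasistrong X T \<longleftrightarrow> finite T \<and> is_tree T \<and> (\<forall>x\<in>X. level T x \<noteq> {}) \<and>
     (\<forall>x y. consec X x y \<longrightarrow> (\<forall>s\<in>level T x. card (cone T s y) = 2))"
proof -
  have "(\<exists>t1 t2. t1 \<in> level T y \<and> t2 \<in> level T y \<and> prefix s t1 \<and> prefix s t2 \<and>
            \<not> prefix t1 t2 \<and> \<not> prefix t2 t1 \<and> (\<forall>t\<in>level T y. prefix s t \<longrightarrow> t = t1 \<or> t = t2))
        \<longleftrightarrow> card (cone T s y) = 2" for s y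
  proof -
    have "\<forall>t\<in>cone T s y. length t = y"
      by (simp add: mem_cone_iff)
    then have "card (cone T s y) = 2 \<longleftrightarrow>
        (\<exists>t1 t2. cone T s y = {t1, t2} \<and> \<not> prefix t1 t2 \<and> \<not> prefix t2 t1)"
      by (rule card_eq_2_iff_distinct_same_length)
    then show ?thesis
      unfolding cone_def by blast
  qed
  then show ?thesis
    unfolding quasistrong_def by presburger
qed

lemma card_cone_consec: "quasistrong X T \<Longrightarrow> consec X a b \<Longrightarrow> s \<in> level T a \<Longrightarrow> card (cone T s b) = 2"
  unfolding quasistrong_iff_card_cone by blast

lemma cone_UN:
  assumes "is_tree T" "s \<in> level T a" "a \<le> c" "c \<le> b"
  shows "cone T s b = (\<Union>d\<in>cone T s c. cone T d b)"
proof
  show "cone T s b \<subseteq> (\<Union>d\<in>cone T s c. cone T d b)"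
  proof
    fix t assume t: "t \<in> cone T s b"
    have "take c t \<in> cone T s c"
      using t assms prefix_length_prefix[OF _ take_is_prefix, of s t c]
      unfolding mem_cone_iff is_tree_def level_def by (auto simp: take_is_prefix)
    moreover have "t \<in> cone T (take c t) b"
      using t by (simp add: mem_cone_iff take_is_prefix)
    ultimately show "t \<in> (\<Union>d\<in>cone T s c. cone T d b)" by blast
  qed
qed (auto simp: mem_cone_iff intro: prefix_order.trans)

lemma card_cone:
  assumes q: "quasistrong X T" and "finite X" "a \<in> X" "b \<in> X" "a \<le> b" "s \<in> level T a"
  shows "card (cone T s b) = 2 ^ card (X \<inter> {a<..b})"
  using assms(4-6)
proof (induction "card (X \<inter> {a<..b})" arbitrary: b)
  case 0
  then have "b = a" using \<open>finite X\<close> by auto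
  then show ?case using 0 cone_self[OF \<open>s \<in> level T a\<close>] by simp
next
  case (Suc n)
  then have "X \<inter> {a<..b} \<noteq> {}" by auto
  then have "a < b" by auto
  define c where "c = Max (X \<inter> {a..<b})"
  have "c \<in> X \<inter> {a..<b}"
    unfolding c_def using \<open>finite X\<close> \<open>a \<in> X\<close> \<open>a < b\<close> by (intro Max_in) auto
  moreover have "\<And>z. z \<in> X \<Longrightarrow> a \<le> z \<Longrightarrow> z < b \<Longrightarrow> z \<le> c"
    unfolding c_def using \<open>finite X\<close> by simp
  ultimately have c: "c \<in> X" "a \<le> c" "c < b" "\<And>z. z \<in> X \<Longrightarrow> a \<le> z \<Longrightarrow> z < b \<Longrightarrow> z \<le> c"
    by auto
  then have "consec X c b"
    unfolding consec_def using \<open>b \<in> X\<close> by force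
  have "X \<inter> {a<..b} = insert b (X \<inter> {a<..c})" and "b \<notin> X \<inter> {a<..c}"
    using c \<open>b \<in> X\<close> \<open>a < b\<close> by force+
  then have "card (X \<inter> {a<..c}) = n"
    using Suc.hyps(2) \<open>finite X\<close> by simp
  then have IH: "card (cone T s c) = 2 ^ n"
    using Suc c by blast
  have disjoint: "cone T d1 b \<inter> cone T d2 b = {}"
    if "d1 \<in> cone T s c" "d2 \<in> cone T s c" "d1 \<noteq> d2" for d1 d2
  proof -
    have False if "t \<in> cone T d1 b" "t \<in> cone T d2 b" for t
    proof -
      have "prefix d1 t" "prefix d2 t" "length d1 = length d2"
        using that \<open>d1 \<in> cone T s c\<close> \<open>d2 \<in> cone T s c\<close> by (simp_all add: mem_cone_iff)
      then have "d1 = d2"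
        by (rule prefixes_same_length_eq)
      with \<open>d1 \<noteq> d2\<close> show False ..
    qed
    then show ?thesis by blast
  qed
  have "card (cone T s b) = (\<Sum>d\<in>cone T s c. card (cone T d b))"
    unfolding cone_UN[OF quasistrong_tree[OF q] \<open>s \<in> level T a\<close> c(2) less_imp_le[OF c(3)]]
    using disjoint by (intro card_UN_disjoint) (auto simp: finite_cone quasistrong_finite[OF q])
  also have "\<dots> = (\<Sum>d\<in>cone T s c. 2)"
    using card_cone_consec[OF q \<open>consec X c b\<close>] by (intro sum.cong) (auto simp: cone_def)
  finally show ?case using IH Suc.hyps(2)[symmetric] by simp
qed

lemma cone_nonempty:
  assumes "quasistrong X T" "finite X" "a \<in> X" "b \<in> X" "a \<le> b" "s \<in> level T a"
  shows "cone T s b \<noteq> {}"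
  using card_cone[OF assms] by (metis card.empty power_not_zero zero_neq_numeral)

section \<open>Binary branchings\<close>

fun branching :: "bool list set \<Rightarrow> (bool list \<Rightarrow> bool) \<Rightarrow> nat list \<Rightarrow> bool list \<Rightarrow> bool" where
  "branching T P [] v \<longleftrightarrow> True"
| "branching T P (z # zs) v \<longleftrightarrow> (\<exists>t1 t2. t1 \<noteq> t2 \<and> t1 \<in> cone T v z \<and> t2 \<in> cone T v z \<and>
      P t1 \<and> P t2 \<and> branching T P zs t1 \<and> branching T P zs t2)"

lemma branching_prefix:
  assumes "branching T P zs w" "prefix v w"
  shows "branching T P zs v"
proof (cases zs)
  case (Cons z zs')
  have "cone T w z \<subseteq> cone T v z"
    using assms(2) by (auto simp: mem_cone_iff intro: prefix_order.trans)
  with assms(1) Cons show ?thesis by auto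
qed simp

lemma quasistrong_prefixes: "quasistrong {length u} {w. prefix w u}"
proof -
  have "finite {w. prefix w u}"
    by (rule finite_subset[of _ "set (prefixes u)"]) auto
  moreover have "is_tree {w. prefix w u}"
    unfolding is_tree_def using prefix_order.trans by blast
  ultimately show ?thesis
    unfolding quasistrong_iff_card_cone by (auto simp: level_def consec_def)
qed

lemma extensions_of_distinct_not_prefix:
  assumes "prefix t1 w1" "prefix t2 w2" "length t1 = length t2" "t1 \<noteq> t2"
  shows "\<not> prefix w1 w2"
proof
  assume "prefix w1 w2"
  with assms(1) have "prefix t1 w2"
    by (rule prefix_order.trans)
  from this assms(2,3) have "t1 = t2"
    by (rule prefixes_same_length_eq)
  with assms(4) show False ..
qed

lemma consec_insert_below:
  assumes "z \<in> X" "\<forall>x\<in>X. z \<le> x" "a < z"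
  shows "consec (insert a X) x y \<longleftrightarrow> x = a \<and> y = z \<or> consec X x y"
proof
  assume c: "consec (insert a X) x y"
  show "x = a \<and> y = z \<or> consec X x y"
  proof (cases "x = a")
    case True
    then have "y \<in> X" "\<not> (a < z \<and> z < y)"
      using c assms(1) unfolding consec_def by auto
    then show ?thesis
      using True assms(2,3) by force
  next
    case False
    then have "x \<in> X"
      using c unfolding consec_def by simp
    then have "a < x"
      using assms(2,3) by force
    then show ?thesis
      using c unfolding consec_def by auto
  qed
next
  assume "x = a \<and> y = z \<or> consec X x y"
  then show "consec (insert a X) x y"
  proof
    assume "x = a \<and> y = z"
    then show ?thesis
      using assms unfolding consec_def by force
  next
    assume "consec X x y"
    moreover from this have "a < x"
      using assms(2,3) unfolding consec_def by force
    ultimately show ?thesis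
      unfolding consec_def by auto
  qed
qed

lemma cone_Un_eq_left: "\<forall>t\<in>S2. \<not> prefix s t \<Longrightarrow> cone (S1 \<union> S2) s y = cone S1 s y"
  by (auto simp: mem_cone_iff)

lemma quasistrong_join:
  assumes S1: "quasistrong X S1" "t1 \<in> S1" "\<forall>w\<in>S1. prefix w t1 \<or> prefix t1 w"
    and S2: "quasistrong X S2" "t2 \<in> S2" "\<forall>w\<in>S2. prefix w t2 \<or> prefix t2 w"
    and z: "z \<in> X" "\<forall>x\<in>X. z \<le> x" "length t1 = z" "length t2 = z" "t1 \<noteq> t2"
    and u: "prefix u t1" "prefix u t2" "length u < z"
  shows "quasistrong (insert (length u) X) (S1 \<union> S2)"
proof -
  have above1: "prefix t1 w" if "w \<in> S1" "z \<le> length w" for w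
    using comparable_prefix_above[OF bspec[OF S1(3) that(1)]] that(2) z(3) by simp
  have above2: "prefix t2 w" if "w \<in> S2" "z \<le> length w" for w
    using comparable_prefix_above[OF bspec[OF S2(3) that(1)]] that(2) z(4) by simp
  have separated: "\<not> prefix w1 w2 \<and> \<not> prefix w2 w1"
    if "w1 \<in> S1" "w2 \<in> S2" "z \<le> length w1" "z \<le> length w2" for w1 w2
    using extensions_of_distinct_not_prefix[OF above1[OF that(1,3)] above2[OF that(2,4)]]
      extensions_of_distinct_not_prefix[OF above2[OF that(2,4)] above1[OF that(1,3)]] z(3-5) by simp
  have "u \<in> S1"
    using quasistrong_tree[OF S1(1)] S1(2) u(1) unfolding is_tree_def by blast
  have "w = u" if "w \<in> S1 \<union> S2" "length w = length u" for w
  proof -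
    have "prefix w t1 \<or> prefix w t2"
      using that S1(3) S2(3) z(3,4) u(3) comparable_prefix_below by (metis Un_iff less_imp_le)
    then show ?thesis
      using u(1,2) that(2) prefixes_same_length_eq by metis
  qed
  then have level_u: "level (S1 \<union> S2) (length u) = {u}"
    using \<open>u \<in> S1\<close> by (auto simp: level_def)
  have "w = t1" if "w \<in> S1" "length w = z" for w
    using prefix_length_eq[OF above1[OF that(1)]] that(2) z(3) by simp
  moreover have "w = t2" if "w \<in> S2" "length w = z" for w
    using prefix_length_eq[OF above2[OF that(1)]] that(2) z(4) by simp
  ultimately have cone_u: "cone (S1 \<union> S2) u z = {t1, t2}"
    using S1(2) S2(2) z(3,4) u(1,2) unfolding mem_cone_iff set_eq_iff by blast
  have "card (cone (S1 \<union> S2) s y) = 2"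
    if c: "consec (insert (length u) X) x y" and s: "s \<in> level (S1 \<union> S2) x" for x y s
  proof (cases "x = length u")
    case True
    have "length u \<notin> X"
      using z(2) u(3) by force
    then have "y = z"
      using c True consec_insert_below[OF z(1,2) u(3)] by (auto simp: consec_def)
    then show ?thesis
      using True s level_u cone_u z(5) by auto
  next
    case False
    then have "consec X x y"
      using c consec_insert_below[OF z(1,2) u(3)] by blast
    then have "z \<le> length s"
      using s z(2) by (auto simp: consec_def level_def)
    show ?thesis
    proof (cases "s \<in> S1")
      case True
      then have "cone (S1 \<union> S2) s y = cone S1 s y"
        using separated \<open>z \<le> length s\<close> prefix_length_le order.trans
        by (intro cone_Un_eq_left) blast
      then show ?thesis
        using card_cone_consec[OF S1(1) \<open>consec X x y\<close>] True s by (simp add: level_def)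
    next
      case False
      then have "s \<in> S2"
        using s by (simp add: level_def)
      then have "cone (S2 \<union> S1) s y = cone S2 s y"
        using separated \<open>z \<le> length s\<close> prefix_length_le order.trans
        by (intro cone_Un_eq_left) blast
      then show ?thesis
        using card_cone_consec[OF S2(1) \<open>consec X x y\<close>] \<open>s \<in> S2\<close> s
        by (simp add: level_def Un_commute)
    qed
  qed
  moreover have "finite (S1 \<union> S2)"
    using quasistrong_finite S1(1) S2(1) by blast
  moreover have "is_tree (S1 \<union> S2)"
    using quasistrong_tree[OF S1(1)] quasistrong_tree[OF S2(1)] unfolding is_tree_def by blast
  moreover have "level (S1 \<union> S2) x \<noteq> {}" if "x \<in> insert (length u) X" for x
    using that level_u quasistrong_level_nonempty[OF S1(1)] by (auto simp: level_def)
  ultimately show ?thesis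
    unfolding quasistrong_iff_card_cone by blast
qed

lemma quasistrong_subtree_of_branching:
  assumes T: "is_tree T"
  shows "u \<in> T \<Longrightarrow> sorted_wrt (<) (length u # zs) \<Longrightarrow> branching T P zs u \<Longrightarrow>
    \<exists>S\<subseteq>T. u \<in> S \<and> (\<forall>w\<in>S. prefix w u \<or> prefix u w) \<and>
        quasistrong (set (length u # zs)) S \<and> (\<forall>w\<in>S. length w \<in> set zs \<longrightarrow> P w) \<and>
        (\<forall>w\<in>S. \<exists>l\<in>S. prefix w l \<and> length l = last (length u # zs))"
proof (induction zs arbitrary: u)
  case Nil
  have "{w. prefix w u} \<subseteq> T"
    using Nil.prems(1) T unfolding is_tree_def by blast
  then show ?case
    using quasistrong_prefixes[of u] by (intro exI[of _ "{w. prefix w u}"]) auto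
next
  case (Cons z zs)
  obtain t1 t2 where t: "t1 \<noteq> t2" "t1 \<in> cone T u z" "t2 \<in> cone T u z" "P t1" "P t2"
    "branching T P zs t1" "branching T P zs t2"
    using Cons.prems(3) by auto
  have sorted: "sorted_wrt (<) (z # zs)" and "length u < z"
    using Cons.prems(2) by auto
  obtain S1 where S1: "S1 \<subseteq> T" "t1 \<in> S1" "\<forall>w\<in>S1. prefix w t1 \<or> prefix t1 w"
    "quasistrong (set (z # zs)) S1" "\<forall>w\<in>S1. length w \<in> set zs \<longrightarrow> P w"
    "\<forall>w\<in>S1. \<exists>l\<in>S1. prefix w l \<and> length l = last (z # zs)"
    using Cons.IH[of t1] t(2,6) sorted by (auto simp: mem_cone_iff)
  obtain S2 where S2: "S2 \<subseteq> T" "t2 \<in> S2" "\<forall>w\<in>S2. prefix w t2 \<or> prefix t2 w"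
    "quasistrong (set (z # zs)) S2" "\<forall>w\<in>S2. length w \<in> set zs \<longrightarrow> P w"
    "\<forall>w\<in>S2. \<exists>l\<in>S2. prefix w l \<and> length l = last (z # zs)"
    using Cons.IH[of t2] t(3,7) sorted by (auto simp: mem_cone_iff)
  have "quasistrong (set (length u # z # zs)) (S1 \<union> S2)"
    using quasistrong_join[OF S1(4,2,3) S2(4,2,3)] t(1-3) sorted \<open>length u < z\<close>
    by (auto simp: mem_cone_iff less_imp_le)
  moreover have "u \<in> S1"
    using quasistrong_tree[OF S1(4)] S1(2) t(2) unfolding is_tree_def mem_cone_iff by blast
  moreover have "\<forall>w\<in>S1 \<union> S2. prefix w u \<or> prefix u w"
    using S1(3) S2(3) t(2,3) unfolding mem_cone_iff
    by (metis Un_iff prefix_same_cases prefix_order.trans)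
  moreover have "P w" if "w \<in> S1 \<union> S2" "length w \<in> set (z # zs)" for w
  proof (cases "length w = z")
    case True
    moreover have "length t1 = z" "length t2 = z"
      using t(2,3) by (auto simp: mem_cone_iff)
    ultimately have "w = t1 \<or> w = t2"
      using that(1) S1(3) S2(3) prefix_length_eq by (metis Un_iff)
    then show ?thesis using t(4,5) by blast
  next
    case False
    then show ?thesis using that S1(5) S2(5) by auto
  qed
  moreover have "\<forall>w\<in>S1 \<union> S2. \<exists>l\<in>S1 \<union> S2. prefix w l \<and> length l = last (length u # z # zs)"
    using S1(6) S2(6) by fastforce
  ultimately show ?case
    using S1(1) S2(1) by (intro exI[of _ "S1 \<union> S2"]) auto
qed

lemma length_leaf_eq:
  assumes "\<forall>w\<in>S. \<exists>l\<in>S. prefix w l \<and> length l = h" "l \<in> leaves S"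
  shows "length l = h"
  using assms unfolding leaves_def by (metis (mono_tags, lifting) mem_Collect_eq prefix_order.le_less)

lemma Min_set_sorted_Cons: "sorted_wrt (<) (m # zs) \<Longrightarrow> Min (set (m # zs)) = (m::nat)"
  by (simp add: Min_insert2 less_imp_le)

lemma card_set_sorted: "sorted_wrt (<) zs \<Longrightarrow> card (set zs) = length (zs::nat list)"
  by (simp add: distinct_card strict_sorted_iff)

section \<open>Persistence\<close>

lemma card_eq_card_le_plus_card_greater:
  fixes a :: "'a::linorder"
  assumes "finite L"
  shows "card L = card {y\<in>L. y \<le> a} + card {y\<in>L. a < y}"
proof -
  have "{y\<in>L. y \<le> a} \<union> {y\<in>L. a < y} = L" "{y\<in>L. y \<le> a} \<inter> {y\<in>L. a < y} = {}"
    by auto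
  then show ?thesis
    using card_Un_disjoint[of "{y\<in>L. y \<le> a}" "{y\<in>L. a < y}"] assms by simp
qed

lemma ex_card_greater_eq:
  fixes L :: "'a::linorder set"
  shows "finite L \<Longrightarrow> N < card L \<Longrightarrow> \<exists>a\<in>L. card {y\<in>L. a < y} = N"
proof (induction N arbitrary: L)
  case 0
  then have "Max L \<in> L"
    using Max_in by fastforce
  moreover have "\<not> Max L < y" if "y \<in> L" for y
    using Max_ge[OF \<open>finite L\<close> that] by simp
  then have "{y\<in>L. Max L < y} = {}"
    by blast
  ultimately show ?case
    by (metis card.empty)
next
  case (Suc N)
  let ?m = "Max L"
  have "?m \<in> L"
    using Suc.prems Max_in by fastforce
  moreover have "N < card (L - {?m})"
    using Suc.prems \<open>?m \<in> L\<close> by simp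
  ultimately obtain a where a: "a \<in> L - {?m}" "card {y\<in>L - {?m}. a < y} = N"
    using Suc.IH[of "L - {?m}"] Suc.prems(1) by blast
  then have "a < ?m"
    using Suc.prems(1) by (metis DiffD1 DiffD2 Max_ge insertI1 order.not_eq_order_implies_strict)
  then have "{y\<in>L. a < y} = insert ?m {y\<in>L - {?m}. a < y}"
    using \<open>?m \<in> L\<close> by auto
  moreover have "finite {y\<in>L - {?m}. a < y}"
    using Suc.prems(1) by simp
  ultimately have "card {y\<in>L. a < y} = Suc N"
    using a(2) by (simp only: card_insert_disjoint) simp
  then show ?case
    using a(1) by blast
qed

fun spaced :: "nat set \<Rightarrow> nat \<Rightarrow> nat \<Rightarrow> nat list \<Rightarrow> bool" where
  "spaced Y e a [] \<longleftrightarrow> True"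
| "spaced Y e a (z # zs) \<longleftrightarrow> a < z \<and> z \<in> Y \<and> e \<le> card (Y \<inter> {a<..z}) \<and> spaced Y e z zs"

lemma spaced_sorted: "spaced Y e a zs \<Longrightarrow> sorted_wrt (<) (a # zs) \<and> set zs \<subseteq> Y"
  by (induction zs arbitrary: a) (auto, metis order.strict_trans)

lemma ex_spaced:
  assumes "finite Y" "1 \<le> e"
  shows "a \<in> Y \<Longrightarrow> p * e + 1 \<le> card {y\<in>Y. a \<le> y} \<Longrightarrow> \<exists>zs. spaced Y e a zs \<and> length zs = p"
proof (induction p arbitrary: a)
  case 0
  show ?case by (intro exI[of _ "[]"]) simp
next
  case (Suc p)
  let ?Ya = "{y\<in>Y. a < y}"
  have "{y\<in>Y. a \<le> y} = insert a ?Ya"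
    using Suc.prems(1) by auto
  then have "Suc p * e \<le> card ?Ya"
    using Suc.prems(2) \<open>finite Y\<close> by simp
  then have "e \<le> card ?Ya"
    by (metis le_add1 le_trans mult_Suc)
  then have "card ?Ya - e < card ?Ya"
    using \<open>1 \<le> e\<close> by linarith
  moreover have "finite ?Ya"
    using \<open>finite Y\<close> by simp
  ultimately obtain z where z: "z \<in> ?Ya" "card {y\<in>?Ya. z < y} = card ?Ya - e"
    using ex_card_greater_eq by blast
  have "Y \<inter> {a<..z} = {y\<in>?Ya. y \<le> z}"
    by auto
  then have gap: "card (Y \<inter> {a<..z}) = e"
    using card_eq_card_le_plus_card_greater[of ?Ya z] \<open>finite Y\<close> z(2) \<open>e \<le> card ?Ya\<close> by simp
  have "{y\<in>Y. z \<le> y} = insert z {y\<in>?Ya. z < y}"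
    using z(1) by auto
  then have "p * e + 1 \<le> card {y\<in>Y. z \<le> y}"
    using z(2) \<open>Suc p * e \<le> card ?Ya\<close> \<open>finite Y\<close> by simp
  moreover have "z \<in> Y"
    using z(1) by simp
  ultimately obtain zs where "spaced Y e z zs" "length zs = p"
    using Suc.IH by blast
  then show ?case
    using z(1) gap by (intro exI[of _ "z # zs"]) simp
qed

definition extends_to_colour :: "bool list set \<Rightarrow> (bool list \<Rightarrow> nat) \<Rightarrow> nat \<Rightarrow> nat \<Rightarrow> bool list \<Rightarrow> bool" where
  "extends_to_colour T C h c w \<longleftrightarrow> (\<exists>t\<in>cone T w h. C t = c)"

lemma extends_to_colour_prefix:
  "extends_to_colour T C h c w \<Longrightarrow> prefix v w \<Longrightarrow> extends_to_colour T C h c v"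
proof -
  assume "extends_to_colour T C h c w" "prefix v w"
  then obtain t where "t \<in> cone T w h" "C t = c"
    unfolding extends_to_colour_def by blast
  with \<open>prefix v w\<close> have "t \<in> cone T v h"
    by (auto simp: mem_cone_iff intro: prefix_order.trans)
  with \<open>C t = c\<close> show ?thesis
    unfolding extends_to_colour_def by blast
qed

lemma ex_monochromatic_branching:
  assumes q: "quasistrong Y T" and "finite Y" "k < 2 ^ e"
    and C: "\<forall>s\<in>level T (Max Y). C s < k"
  shows "spaced Y e a zs \<Longrightarrow> a \<in> Y \<Longrightarrow> u \<in> level T a \<Longrightarrow>
    \<exists>c<k. extends_to_colour T C (Max Y) c u \<and> branching T (extends_to_colour T C (Max Y) c) zs u"
proof (induction zs arbitrary: a u)
  case Nil
  have "Max Y \<in> Y" "a \<le> Max Y"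
    using \<open>finite Y\<close> Nil.prems(2) Max_in by auto
  then obtain t where "t \<in> cone T u (Max Y)"
    using cone_nonempty[OF q \<open>finite Y\<close> Nil.prems(2)] Nil.prems(3) by blast
  moreover from this have "C t < k"
    using C by (simp add: cone_def)
  ultimately show ?case
    unfolding extends_to_colour_def by auto
next
  case (Cons z zs)
  let ?P = "extends_to_colour T C (Max Y)"
  have z: "a < z" "z \<in> Y" "e \<le> card (Y \<inter> {a<..z})" "spaced Y e z zs"
    using Cons.prems(1) by auto
  have "k < 2 ^ card (Y \<inter> {a<..z})"
    using \<open>k < 2 ^ e\<close> z(3) by (meson less_le_trans one_le_numeral power_increasing)
  then have "k < card (cone T u z)"
    using card_cone[OF q \<open>finite Y\<close> Cons.prems(2) z(2)] z(1) Cons.prems(3) by simp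
  have "\<forall>d\<in>cone T u z. \<exists>c<k. ?P c d \<and> branching T (?P c) zs d"
    using Cons.IH[OF z(4) z(2)] by (simp add: cone_def)
  then obtain col where col: "\<forall>d\<in>cone T u z. col d < k \<and> ?P (col d) d \<and> branching T (?P (col d)) zs d"
    by metis
  have "\<not> inj_on col (cone T u z)"
  proof
    assume "inj_on col (cone T u z)"
    then have "card (cone T u z) \<le> card {..<k}"
      by (rule card_inj_on_le) (use col in auto)
    then show False
      using \<open>k < card (cone T u z)\<close> by simp
  qed
  then obtain d1 d2 where d: "d1 \<in> cone T u z" "d2 \<in> cone T u z" "d1 \<noteq> d2" "col d1 = col d2"
    unfolding inj_on_def by blast
  then have "?P (col d1) u"
    using col extends_to_colour_prefix by (meson mem_cone_iff)
  moreover have "branching T (?P (col d1)) (z # zs) u"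
  proof -
    have "?P (col d1) d1 \<and> branching T (?P (col d1)) zs d1"
      using col d(1) by blast
    moreover have "?P (col d1) d2 \<and> branching T (?P (col d1)) zs d2"
      using col[rule_format, OF d(2)] d(4) by simp
    ultimately show ?thesis
      unfolding branching.simps using d(1-3) by blast
  qed
  ultimately show ?case
    using col d(1) by blast
qed

lemma monochromatic_subtree:
  fixes C :: "bool list \<Rightarrow> nat"
  assumes q: "quasistrong Y T" and "finite Y" "Y \<noteq> {}" "k < 2 ^ e"
    and C: "\<forall>s\<in>level T (Max Y). C s < k" and zs: "spaced Y e (Min Y) zs"
  shows "\<exists>c<k. \<exists>S\<subseteq>T. quasistrong (set (Min Y # zs)) S \<and>
    (\<forall>l\<in>leaves S. \<exists>t\<in>level T (Max Y). prefix l t \<and> C t = c)"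
proof -
  let ?P = "extends_to_colour T C (Max Y)"
  have "Min Y \<in> Y"
    using assms by simp
  then obtain u where u: "u \<in> level T (Min Y)"
    using quasistrong_level_nonempty[OF q] by blast
  obtain c where c: "c < k" "?P c u" "branching T (?P c) zs u"
    using ex_monochromatic_branching[OF q \<open>finite Y\<close> \<open>k < 2 ^ e\<close> C zs \<open>Min Y \<in> Y\<close> u] by blast
  have "u \<in> T" and len_u: "length u = Min Y"
    using u by (auto simp: level_def)
  moreover have "sorted_wrt (<) (Min Y # zs)"
    using spaced_sorted[OF zs] by simp
  ultimately obtain S where S: "S \<subseteq> T" "\<forall>w\<in>S. prefix w u \<or> prefix u w"
    "quasistrong (set (Min Y # zs)) S" "\<forall>w\<in>S. length w \<in> set zs \<longrightarrow> ?P c w"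
    "\<forall>w\<in>S. \<exists>l\<in>S. prefix w l \<and> length l = last (Min Y # zs)"
    using quasistrong_subtree_of_branching[OF quasistrong_tree[OF q] \<open>u \<in> T\<close> _ c(3)] by auto
  have "?P c l" if "l \<in> leaves S" for l
  proof (cases zs)
    case Nil
    then have "length l = length u"
      using length_leaf_eq[OF S(5) that] len_u by simp
    moreover have "l \<in> S"
      using that by (simp add: leaves_def)
    ultimately have "l = u"
      using S(2) prefix_length_eq by metis
    then show ?thesis
      using c(2) by simp
  next
    case (Cons z zs')
    then have "length l \<in> set zs"
      using length_leaf_eq[OF S(5) that] by simp
    then show ?thesis
      using S(4) that by (simp add: leaves_def)
  qed
  then show ?thesis
    using c(1) S(1,3) unfolding extends_to_colour_def cone_def by blast
qed

fun persistence_bound :: "nat \<Rightarrow> nat \<Rightarrow> nat \<Rightarrow> nat" where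
  "persistence_bound e m 0 = m + 1"
| "persistence_bound e m (Suc i) = (persistence_bound e m i - 1) * e + 1"

lemma persistence_bound_pos: "1 \<le> persistence_bound e m i"
  by (cases i) auto

lemma persistent_if_card_ge:
  assumes "k < 2 ^ e" "1 \<le> e"
  shows "finite Y \<Longrightarrow> Y \<noteq> {} \<Longrightarrow> persistence_bound e (Min Y) i \<le> card Y \<Longrightarrow> persistent k i Y"
proof (induction i arbitrary: Y)
  case 0
  then show ?case by (simp add: omega_large_def)
next
  case (Suc i)
  let ?m = "Min Y"
  let ?p = "persistence_bound e ?m i"
  have "?m \<in> Y"
    using Suc.prems by simp
  moreover have "{y\<in>Y. ?m \<le> y} = Y"
    using Suc.prems(1) by auto
  ultimately obtain zs where zs: "spaced Y e ?m zs" "length zs = ?p - 1"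
    using ex_spaced[OF Suc.prems(1) \<open>1 \<le> e\<close>, of ?m "?p - 1"] Suc.prems(3) by auto
  have sorted: "sorted_wrt (<) (?m # zs)" and "set zs \<subseteq> Y"
    using spaced_sorted[OF zs(1)] by auto
  have "card (set (?m # zs)) = ?p"
    using card_set_sorted[OF sorted] zs(2) persistence_bound_pos[of e ?m i] by simp
  then have "persistent k i (set (?m # zs))"
    using Suc.IH[of "set (?m # zs)"] Min_set_sorted_Cons[OF sorted] by simp
  moreover have "\<exists>c<k. \<exists>S\<subseteq>T. quasistrong (set (?m # zs)) S \<and>
      (\<forall>l\<in>leaves S. \<exists>t\<in>level T (Max Y). prefix l t \<and> C t = c)"
    if "quasistrong Y T" "\<forall>s\<in>level T (Max Y). C s < k" for T and C :: "bool list \<Rightarrow> nat"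
    using monochromatic_subtree[OF that(1) Suc.prems(1,2) \<open>k < 2 ^ e\<close> that(2) zs(1)] .
  moreover have "set (?m # zs) \<subseteq> Y"
    using \<open>?m \<in> Y\<close> \<open>set zs \<subseteq> Y\<close> by simp
  ultimately show ?case
    using Suc.prems(1,2) by (auto simp del: set_simps)
qed

section \<open>Superpersistence\<close>

lemma ex_node_without_extension_in:
  assumes "finite B" "card B < card D" "\<forall>d\<in>D. length d = n"
  shows "\<exists>d\<in>D. \<forall>t\<in>B. \<not> prefix d t"
proof (rule ccontr)
  assume "\<not> ?thesis"
  then obtain g where g: "\<forall>d\<in>D. g d \<in> B \<and> prefix d (g d)"
    by metis
  have "inj_on g D"
  proof (rule inj_onI)
    fix d1 d2 assume "d1 \<in> D" "d2 \<in> D" "g d1 = g d2"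
    then have "prefix d1 (g d1)" "prefix d2 (g d1)" "length d1 = length d2"
      using g assms(3) by auto
    then show "d1 = d2"
      by (rule prefixes_same_length_eq)
  qed
  then have "card D \<le> card B"
    using card_inj_on_le[of g D B] g assms(1) by blast
  with assms(2) show False
    by simp
qed

lemma card_cone_greater:
  assumes q: "quasistrong X T" and "finite X" "length v \<in> X" "v \<in> level T (length v)"
    and "a \<in> X" "length v \<le> a"
    and A: "A \<subseteq> X" "\<forall>y\<in>A. length v < y \<and> y \<le> a" "N \<le> card A"
  shows "N < card (cone T v a)"
proof -
  have "A \<subseteq> X \<inter> {length v<..a}"
    using A(1,2) by auto
  then have "N \<le> card (X \<inter> {length v<..a})"
    using A(3) \<open>finite X\<close> card_mono[of "X \<inter> {length v<..a}" A] by simp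
  then have "(2::nat) ^ N \<le> 2 ^ card (X \<inter> {length v<..a})"
    by (rule power_increasing) simp
  then have "N < 2 ^ card (X \<inter> {length v<..a})"
    using less_exp[of N] by linarith
  then show ?thesis
    using card_cone[OF q assms(2,3,5,6,4)] by simp
qed

text \<open>Split \<open>L\<close> at a level \<open>a\<close> with \<open>N\<close> levels of \<open>L\<close> above it. Below \<open>a\<close> lie at least
  \<open>N\<close> levels of \<open>X\<close>, so \<open>v\<close> has more than \<open>N\<close> extensions at level \<open>a\<close>, whereas at most \<open>N\<close>
  extensions of \<open>v\<close> on the levels above \<open>a\<close> have colour \<open>c\<close>.\<close>

lemma ex_node_avoiding_colour:
  assumes q: "quasistrong X T" and "finite X" and v: "v \<in> T" "length v \<in> X"
    and L: "L \<subseteq> X" "\<forall>y\<in>L. length v < y" "2 * N \<le> card L"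
    and sparse: "\<forall>y\<in>L. card {t \<in> cone T v y. C t = c} \<le> 1"
  shows "\<exists>w B. w \<in> T \<and> prefix v w \<and> length w \<in> X \<and> B \<subseteq> L \<and> N \<le> card B \<and>
     (\<forall>y\<in>B. length w < y) \<and> (\<forall>y\<in>B. \<forall>t\<in>cone T w y. C t \<noteq> c)"
proof (cases "N = 0")
  case True
  then show ?thesis
    using v by (intro exI[of _ v] exI[of _ "{}"]) auto
next
  case False
  have "finite L"
    using L(1) \<open>finite X\<close> finite_subset by blast
  moreover have "N < card L"
    using False L(3) by linarith
  ultimately obtain a where a: "a \<in> L" "card {y\<in>L. a < y} = N"
    using ex_card_greater_eq by blast
  define B where "B = {y\<in>L. a < y}"
  have "N \<le> card {y\<in>L. y \<le> a}"
    using card_eq_card_le_plus_card_greater[OF \<open>finite L\<close>, of a] a(2) L(3) by simp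
  moreover have "{y\<in>L. y \<le> a} \<subseteq> X" "\<forall>y\<in>{y\<in>L. y \<le> a}. length v < y \<and> y \<le> a"
    using L(1,2) by auto
  moreover have "a \<in> X" "length v \<le> a" "v \<in> level T (length v)"
    using a(1) L(1,2) v(1) by (auto simp: level_def less_imp_le)
  ultimately have "N < card (cone T v a)"
    using card_cone_greater[OF q \<open>finite X\<close> v(2)] by blast
  let ?bad = "\<Union>y\<in>B. {t \<in> cone T v y. C t = c}"
  have "card ?bad \<le> (\<Sum>y\<in>B. card {t \<in> cone T v y. C t = c})"
    using \<open>finite L\<close> by (intro card_UN_le) (simp add: B_def)
  also have "\<dots> \<le> N"
    using sum_mono[of B "\<lambda>y. card {t \<in> cone T v y. C t = c}" "\<lambda>_. 1"] sparse a(2)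
    by (simp add: B_def)
  also have "\<dots> < card (cone T v a)"
    by fact
  finally have "card ?bad < card (cone T v a)" .
  moreover have "?bad \<subseteq> T"
    by (auto simp: mem_cone_iff)
  then have "finite ?bad"
    using quasistrong_finite[OF q] finite_subset by blast
  ultimately obtain d where d: "d \<in> cone T v a" "\<forall>t\<in>?bad. \<not> prefix d t"
    using ex_node_without_extension_in[of ?bad "cone T v a" a] by (auto simp: mem_cone_iff)
  have "C t \<noteq> c" if "y \<in> B" "t \<in> cone T d y" for y t
  proof
    assume "C t = c"
    moreover have "prefix d t" "t \<in> cone T v y"
      using that(2) d(1) prefix_order.trans[of v d t] by (simp_all add: mem_cone_iff)
    ultimately show False
      using d(2) that(1) by blast
  qed
  moreover have "d \<in> T" "prefix v d" "length d \<in> X" "\<forall>y\<in>B. length d < y"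
    using d(1) \<open>a \<in> X\<close> by (auto simp: mem_cone_iff B_def)
  moreover have "B \<subseteq> L" "N \<le> card B"
    using a(2) by (auto simp: B_def)
  ultimately show ?thesis
    by blast
qed

definition frontier ::
    "'i set \<Rightarrow> ('i \<Rightarrow> bool list set) \<Rightarrow> ('i \<Rightarrow> bool list) \<Rightarrow> nat set \<Rightarrow> nat set \<Rightarrow>
     ('i \<Rightarrow> bool list set) \<Rightarrow> bool" where
  "frontier I T u X L F \<longleftrightarrow> (\<forall>r\<in>I. finite (F r) \<and>
     (\<forall>v\<in>F r. v \<in> T r \<and> prefix (u r) v \<and> length v \<in> X \<and> (\<forall>y\<in>L. length v < y)))"

lemma frontier_subset_cones:
  assumes F: "frontier I T u X L F" and "y \<in> L" "L \<subseteq> X"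
    and F': "\<forall>r\<in>I. finite (F' r) \<and> F' r \<subseteq> (\<Union>v\<in>F r. cone (T r) v y)"
  shows "frontier I T u X {z\<in>L. y < z} F'"
proof -
  have "t \<in> T r \<and> prefix (u r) t \<and> length t \<in> X \<and> (\<forall>z\<in>{z\<in>L. y < z}. length t < z)"
    if rt: "r \<in> I" "t \<in> F' r" for r t
  proof -
    obtain v where "v \<in> F r" "t \<in> cone (T r) v y"
      using F' rt by blast
    moreover from this have "prefix (u r) v"
      using F rt(1) by (simp add: frontier_def)
    ultimately show ?thesis
      using \<open>y \<in> L\<close> \<open>L \<subseteq> X\<close> prefix_order.trans[of "u r" v t] by (auto simp: mem_cone_iff)
  qed
  then show ?thesis
    using F' unfolding frontier_def by blast
qed

lemma frontier_doubling:
  fixes F :: "'i \<Rightarrow> bool list set"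
  assumes "finite I" "\<forall>r\<in>I. finite (F r)"
    and two: "\<forall>r\<in>I. \<forall>v\<in>F r. 2 \<le> card {t \<in> cone (T r) v y. C t = cc r}"
  obtains F' where "\<forall>r\<in>I. finite (F' r) \<and> F' r \<subseteq> (\<Union>v\<in>F r. cone (T r) v y)"
    and "(\<Sum>r\<in>I. card (F' r)) \<le> 2 * (\<Sum>r\<in>I. card (F r))"
    and "\<forall>zs. (\<forall>r\<in>I. \<forall>t\<in>F' r. branching (T r) (\<lambda>w. C w = cc r) zs t) \<longrightarrow>
       (\<forall>r\<in>I. \<forall>v\<in>F r. branching (T r) (\<lambda>w. C w = cc r) (y # zs) v)"
proof -
  define S where "S r v = {t \<in> cone (T r) v y. C t = cc r}" for r v
  define pick where "pick r v = (SOME p. fst p \<noteq> snd p \<and> fst p \<in> S r v \<and> snd p \<in> S r v)" for r v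
  have pick: "fst (pick r v) \<noteq> snd (pick r v) \<and> fst (pick r v) \<in> S r v \<and> snd (pick r v) \<in> S r v"
    if "r \<in> I" "v \<in> F r" for r v
  proof -
    have "2 \<le> card (S r v)"
      using two that unfolding S_def by blast
    then obtain P where "P \<subseteq> S r v" "card P = 2"
      by (rule obtain_subset_with_card_n)
    then obtain t1 t2 where "t1 \<noteq> t2" "t1 \<in> S r v" "t2 \<in> S r v"
      unfolding card_2_iff by blast
    then have "\<exists>p. fst p \<noteq> snd p \<and> fst p \<in> S r v \<and> snd p \<in> S r v"
      by (intro exI[of _ "(t1, t2)"]) simp
    then show ?thesis
      unfolding pick_def by (rule someI_ex)
  qed
  define F' where "F' r = (\<Union>v\<in>F r. {fst (pick r v), snd (pick r v)})" for r
  have "finite (F' r)" if "r \<in> I" for r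
    using that assms(2) unfolding F'_def by simp
  moreover have "F' r \<subseteq> (\<Union>v\<in>F r. cone (T r) v y)" if "r \<in> I" for r
    using pick[OF that] unfolding F'_def S_def by blast
  moreover have "card (F' r) \<le> 2 * card (F r)" if "r \<in> I" for r
  proof -
    have "card (F' r) \<le> (\<Sum>v\<in>F r. card {fst (pick r v), snd (pick r v)})"
      unfolding F'_def using assms(2) that by (intro card_UN_le) simp
    also have "\<dots> \<le> (\<Sum>v\<in>F r. 2)"
      by (intro sum_mono) (simp add: card_insert_le_m1)
    finally show ?thesis
      by simp
  qed
  then have "(\<Sum>r\<in>I. card (F' r)) \<le> (\<Sum>r\<in>I. 2 * card (F r))"
    by (rule sum_mono)
  then have "(\<Sum>r\<in>I. card (F' r)) \<le> 2 * (\<Sum>r\<in>I. card (F r))"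
    by (simp only: sum_distrib_left)
  moreover have "branching (T r) (\<lambda>w. C w = cc r) (y # zs) v"
    if IH: "\<forall>r\<in>I. \<forall>t\<in>F' r. branching (T r) (\<lambda>w. C w = cc r) zs t" and "r \<in> I" "v \<in> F r"
    for zs r v
  proof -
    let ?t1 = "fst (pick r v)" and ?t2 = "snd (pick r v)"
    have "?t1 \<in> F' r" "?t2 \<in> F' r"
      using \<open>v \<in> F r\<close> unfolding F'_def by auto
    then have "branching (T r) (\<lambda>w. C w = cc r) zs ?t1" "branching (T r) (\<lambda>w. C w = cc r) zs ?t2"
      using IH \<open>r \<in> I\<close> by blast+
    moreover have "?t1 \<noteq> ?t2" "?t1 \<in> cone (T r) v y" "?t2 \<in> cone (T r) v y" "C ?t1 = cc r" "C ?t2 = cc r"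
      using pick[OF \<open>r \<in> I\<close> \<open>v \<in> F r\<close>] unfolding S_def by auto
    ultimately show ?thesis
      by (simp only: branching.simps) blast
  qed
  ultimately show ?thesis
    using that[of F'] by blast
qed

lemma pigeonhole_Sigma:
  fixes F :: "'i \<Rightarrow> bool list set"
  assumes "finite I" "\<forall>r\<in>I. finite (F r)" "(\<Sum>r\<in>I. card (F r)) \<le> M" "1 \<le> M" "1 \<le> Q"
    and A: "finite A" "M * Q \<le> card A" and P: "\<forall>y\<in>A. \<exists>r\<in>I. \<exists>v\<in>F r. P r v y"
  shows "\<exists>r\<in>I. \<exists>v\<in>F r. \<exists>A'\<subseteq>A. Q \<le> card A' \<and> (\<forall>y\<in>A'. P r v y)"
proof -
  have "\<forall>y\<in>A. \<exists>p\<in>Sigma I F. P (fst p) (snd p) y"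
    using P by fastforce
  then obtain \<beta> where \<beta>: "\<forall>y\<in>A. \<beta> y \<in> Sigma I F \<and> P (fst (\<beta> y)) (snd (\<beta> y)) y"
    by metis
  have "card A \<noteq> 0"
    using A(2) assms(4,5) by (metis le_0_eq mult_is_0 not_one_le_zero)
  then have "Sigma I F \<noteq> {}"
    using \<beta> by fastforce
  moreover have "finite (Sigma I F)" "card (Sigma I F) \<le> M"
    using assms(1-3) by auto
  ultimately obtain p where p: "p \<in> Sigma I F" "card A \<le> card (\<beta> -` {p} \<inter> A) * card (Sigma I F)"
    using pigeonhole_card[of \<beta> A "Sigma I F"] \<beta> A(1) by blast
  have "card (Sigma I F) * Q \<le> card (\<beta> -` {p} \<inter> A) * card (Sigma I F)"
    using p(2) A(2) \<open>card (Sigma I F) \<le> M\<close> by (metis le_trans mult.commute mult_le_mono1)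
  then have "Q \<le> card (\<beta> -` {p} \<inter> A)"
    using \<open>Sigma I F \<noteq> {}\<close> \<open>finite (Sigma I F)\<close> by (simp add: mult.commute card_gt_0_iff)
  then show ?thesis
    using p(1) \<beta> by (intro bexI[of _ "fst p"] bexI[of _ "snd p"] exI[of _ "\<beta> -` {p} \<inter> A"]) auto
qed

lemma ex_node_bad_on_many_levels:
  fixes F :: "'i \<Rightarrow> bool list set" and L :: "nat set"
  assumes "finite I" "\<forall>r\<in>I. finite (F r)" "(\<Sum>r\<in>I. card (F r)) \<le> M" "1 \<le> M" "1 \<le> Q"
    and L: "finite L" "M * Q + N < card L"
    and bad: "\<forall>y\<in>L. N \<le> card {z\<in>L. y < z} \<longrightarrow> (\<exists>r\<in>I. \<exists>v\<in>F r. P r v y)"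
  shows "\<exists>r\<in>I. \<exists>v\<in>F r. \<exists>L'\<subseteq>L. Q \<le> card L' \<and> (\<forall>y\<in>L'. P r v y)"
proof -
  have "N < card L"
    using L(2) by simp
  then obtain a where a: "a \<in> L" "card {z\<in>L. a < z} = N"
    using ex_card_greater_eq[OF L(1)] by blast
  let ?A = "{z\<in>L. z \<le> a}"
  have "M * Q \<le> card ?A"
    using card_eq_card_le_plus_card_greater[OF L(1), of a] a(2) L(2) by simp
  moreover have "\<exists>r\<in>I. \<exists>v\<in>F r. P r v y" if "y \<in> ?A" for y
  proof -
    have "{z\<in>L. a < z} \<subseteq> {z\<in>L. y < z}"
      using that by auto
    then have "N \<le> card {z\<in>L. y < z}"
      using a(2) card_mono[of "{z\<in>L. y < z}" "{z\<in>L. a < z}"] L(1) by simp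
    then show ?thesis
      using bad that by blast
  qed
  moreover have "finite ?A"
    using L(1) by simp
  ultimately obtain r v A' where "r \<in> I" "v \<in> F r" "A' \<subseteq> ?A" "Q \<le> card A'" "\<forall>y\<in>A'. P r v y"
    using pigeonhole_Sigma[OF assms(1-5), of ?A P] by blast
  then show ?thesis
    by blast
qed

fun branching_levels :: "nat \<Rightarrow> nat \<Rightarrow> nat \<Rightarrow> nat" where
  "branching_levels Q 0 M = 0"
| "branching_levels Q (Suc j) M = M * Q + branching_levels Q j (2 * M) + 1"

lemma branching_or_sparse_node:
  fixes I :: "'i set" and T :: "'i \<Rightarrow> bool list set" and F :: "'i \<Rightarrow> bool list set"
  assumes "finite I" "finite X" "1 \<le> Q"
  shows "\<lbrakk>frontier I T u X L F; L \<subseteq> X; 1 \<le> M; (\<Sum>r\<in>I. card (F r)) \<le> M;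
      branching_levels Q j M \<le> card L\<rbrakk> \<Longrightarrow>
    (\<exists>zs. sorted_wrt (<) zs \<and> set zs \<subseteq> L \<and> length zs = j \<and>
        (\<forall>r\<in>I. \<forall>v\<in>F r. branching (T r) (\<lambda>w. C w = cc r) zs v))
    \<or> (\<exists>r\<in>I. \<exists>v L'. v \<in> T r \<and> prefix (u r) v \<and> length v \<in> X \<and> L' \<subseteq> L \<and>
        (\<forall>y\<in>L'. length v < y) \<and> Q \<le> card L' \<and>
        (\<forall>y\<in>L'. card {t \<in> cone (T r) v y. C t = cc r} \<le> 1))"
proof (induction j arbitrary: F L M)
  case 0
  show ?case
    by (intro disjI1 exI[of _ "[]"]) simp
next
  case (Suc j)
  let ?N = "branching_levels Q j (2 * M)"
  let ?sparse = "\<lambda>r v y. card {t \<in> cone (T r) v y. C t = cc r} \<le> 1"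
  have "finite L"
    using Suc.prems(2) \<open>finite X\<close> finite_subset by blast
  have fin: "\<forall>r\<in>I. finite (F r)"
    using Suc.prems(1) by (simp add: frontier_def)
  show ?case
  proof (cases "\<exists>y\<in>L. (\<forall>r\<in>I. \<forall>v\<in>F r. \<not> ?sparse r v y) \<and> ?N \<le> card {z\<in>L. y < z}")
    case True
    then obtain y where y: "y \<in> L" "\<forall>r\<in>I. \<forall>v\<in>F r. \<not> ?sparse r v y" "?N \<le> card {z\<in>L. y < z}"
      by blast
    have two: "\<forall>r\<in>I. \<forall>v\<in>F r. 2 \<le> card {t \<in> cone (T r) v y. C t = cc r}"
    proof (intro ballI)
      fix r v assume "r \<in> I" "v \<in> F r"
      then have "\<not> ?sparse r v y"
        using y(2) by blast
      then show "2 \<le> card {t \<in> cone (T r) v y. C t = cc r}"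
        by linarith
    qed
    obtain F' where F': "\<forall>r\<in>I. finite (F' r) \<and> F' r \<subseteq> (\<Union>v\<in>F r. cone (T r) v y)"
      "(\<Sum>r\<in>I. card (F' r)) \<le> 2 * (\<Sum>r\<in>I. card (F r))"
      "\<forall>zs. (\<forall>r\<in>I. \<forall>t\<in>F' r. branching (T r) (\<lambda>w. C w = cc r) zs t) \<longrightarrow>
         (\<forall>r\<in>I. \<forall>v\<in>F r. branching (T r) (\<lambda>w. C w = cc r) (y # zs) v)"
      by (rule frontier_doubling[OF \<open>finite I\<close> fin two])
    let ?L = "{z\<in>L. y < z}"
    have "frontier I T u X ?L F'"
      using frontier_subset_cones[OF Suc.prems(1) y(1) Suc.prems(2) F'(1)] .
    moreover have "?L \<subseteq> X" "1 \<le> 2 * M" "(\<Sum>r\<in>I. card (F' r)) \<le> 2 * M"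
      using Suc.prems(2-4) F'(2) by auto
    ultimately consider (branching) zs where "sorted_wrt (<) zs" "set zs \<subseteq> ?L" "length zs = j"
        "\<forall>r\<in>I. \<forall>t\<in>F' r. branching (T r) (\<lambda>w. C w = cc r) zs t"
      | (sparse) "\<exists>r\<in>I. \<exists>v L'. v \<in> T r \<and> prefix (u r) v \<and> length v \<in> X \<and> L' \<subseteq> ?L \<and>
          (\<forall>z\<in>L'. length v < z) \<and> Q \<le> card L' \<and> (\<forall>z\<in>L'. ?sparse r v z)"
      using Suc.IH[where F = F' and L = ?L and M = "2 * M"] y(3) by blast
    then show ?thesis
    proof cases
      case branching
      then have "sorted_wrt (<) (y # zs)" "set (y # zs) \<subseteq> L" "length (y # zs) = Suc j"
        using y(1) by auto
      moreover have "\<forall>r\<in>I. \<forall>v\<in>F r. branching (T r) (\<lambda>w. C w = cc r) (y # zs) v"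
        using F'(3) branching(4) by blast
      ultimately show ?thesis
        by blast    next
      case sparse
      then show ?thesis
        by blast
    qed
  next
    case False
    then have bad: "\<forall>y\<in>L. ?N \<le> card {z\<in>L. y < z} \<longrightarrow> (\<exists>r\<in>I. \<exists>v\<in>F r. ?sparse r v y)"
      by blast
    have many: "M * Q + ?N < card L"
      using Suc.prems(5) by simp
    obtain r v L' where "r \<in> I" "v \<in> F r" "L' \<subseteq> L" "Q \<le> card L'" "\<forall>y\<in>L'. ?sparse r v y"
      using ex_node_bad_on_many_levels[OF \<open>finite I\<close> fin Suc.prems(4,3) \<open>1 \<le> Q\<close> \<open>finite L\<close> many bad]
      by blast
    moreover have "v \<in> T r" "prefix (u r) v" "length v \<in> X" "\<forall>z\<in>L. length v < z"
      using Suc.prems(1) \<open>r \<in> I\<close> \<open>v \<in> F r\<close> by (simp_all add: frontier_def)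
    ultimately show ?thesis
      by (intro disjI2 bexI[of _ r] exI[of _ v] exI[of _ L']) auto
  qed
qed

lemma branching_levels_pos: "1 \<le> n \<Longrightarrow> 1 \<le> branching_levels Q n M"
  by (cases n) auto

definition palette_invariant ::
    "'i set \<Rightarrow> nat set \<Rightarrow> ('i \<Rightarrow> bool list set) \<Rightarrow> (bool list \<Rightarrow> nat) \<Rightarrow>
     ('i \<Rightarrow> bool list) \<Rightarrow> ('i \<Rightarrow> nat set) \<Rightarrow> nat set \<Rightarrow> bool" where
  "palette_invariant I X T C u K L \<longleftrightarrow> L \<subseteq> X \<and>
     (\<forall>r\<in>I. u r \<in> T r \<and> length (u r) \<in> X \<and> (\<forall>y\<in>L. length (u r) < y) \<and> finite (K r) \<and>
        (\<forall>w\<in>T r. prefix (u r) w \<and> length w \<in> L \<longrightarrow> C w \<in> K r))"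

lemma palette_invariant_remove_colour:
  assumes inv: "palette_invariant I X T C u K L" and "r \<in> I"
    and w: "w \<in> T r" "prefix (u r) w" "length w \<in> X"
    and B: "B \<subseteq> L" "\<forall>y\<in>B. length w < y" "\<forall>y\<in>B. \<forall>t\<in>cone (T r) w y. C t \<noteq> c"
  shows "palette_invariant I X T C (u(r := w)) (K(r := K r - {c})) B"
proof -
  have "C t \<in> K r - {c}" if "t \<in> T r" "prefix w t" "length t \<in> B" for t
  proof -
    have "prefix (u r) t"
      using w(2) that(2) by (rule prefix_order.trans)
    then have "C t \<in> K r"
      using inv \<open>r \<in> I\<close> that(1,3) B(1) by (auto simp: palette_invariant_def)
    moreover have "t \<in> cone (T r) w (length t)"
      using that(1,2) by (simp add: mem_cone_iff)
    then have "C t \<noteq> c"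
      using B(3) that(3) by blast
    ultimately show ?thesis
      by blast
  qed
  then show ?thesis
    using inv \<open>r \<in> I\<close> w B(1,2) unfolding palette_invariant_def by auto
qed

lemma palette_nonempty:
  assumes inv: "palette_invariant I X T C u K L" and "finite X" "\<forall>r\<in>I. quasistrong X (T r)"
    and "r \<in> I" "y \<in> L"
  shows "K r \<noteq> {}"
proof -
  have u: "u r \<in> T r" "length (u r) \<in> X" "length (u r) < y" "y \<in> X"
    and K: "\<forall>w\<in>T r. prefix (u r) w \<and> length w \<in> L \<longrightarrow> C w \<in> K r"
    using inv \<open>r \<in> I\<close> \<open>y \<in> L\<close> by (auto simp: palette_invariant_def)
  then obtain t where "t \<in> cone (T r) (u r) y"
    using cone_nonempty[of X "T r" "length (u r)" y "u r"] assms(2-4) by (auto simp: level_def)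
  then have "C t \<in> K r"
    using K \<open>y \<in> L\<close> by (auto simp: mem_cone_iff)
  then show ?thesis
    by blast
qed

lemma branching_or_colour_avoided:
  fixes I :: "'i set" and T :: "'i \<Rightarrow> bool list set" and C :: "bool list \<Rightarrow> nat"
  assumes "finite I" "finite X" and q: "\<forall>r\<in>I. quasistrong X (T r)"
    and "1 \<le> n" "1 \<le> M" "card I \<le> M"
    and inv: "palette_invariant I X T C u K L" and L: "branching_levels (2 * N + 1) n M \<le> card L"
  shows "(\<exists>zs. sorted_wrt (<) zs \<and> set zs \<subseteq> L \<and> length zs = n \<and>
            (\<forall>r\<in>I. \<exists>c. branching (T r) (\<lambda>w. C w = c) zs (u r)))
    \<or> (\<exists>r\<in>I. \<exists>c\<in>K r. \<exists>w B. w \<in> T r \<and> prefix (u r) w \<and> length w \<in> X \<and> B \<subseteq> L \<and> N \<le> card B \<and>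
         (\<forall>y\<in>B. length w < y) \<and> (\<forall>y\<in>B. \<forall>t\<in>cone (T r) w y. C t \<noteq> c))"
proof -
  have "L \<subseteq> X" and u: "\<forall>r\<in>I. u r \<in> T r \<and> length (u r) \<in> X \<and> (\<forall>y\<in>L. length (u r) < y) \<and>
      finite (K r) \<and> (\<forall>w\<in>T r. prefix (u r) w \<and> length w \<in> L \<longrightarrow> C w \<in> K r)"
    using inv by (simp_all add: palette_invariant_def)
  have "L \<noteq> {}"
    using branching_levels_pos[OF \<open>1 \<le> n\<close>, of "2 * N + 1" M] L by auto
  then obtain y where "y \<in> L"
    by blast
  have K_nonempty: "K r \<noteq> {}" if "r \<in> I" for r
    using palette_nonempty[OF inv \<open>finite X\<close> q that \<open>y \<in> L\<close>] .
  define cc where "cc r = (SOME c. c \<in> K r)" for r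
  have cc: "\<forall>r\<in>I. cc r \<in> K r"
    using K_nonempty unfolding cc_def by (simp add: some_in_eq)
  define F where "F r = {u r}" for r
  have "frontier I T u X L F"
    using u by (simp add: F_def frontier_def)
  moreover have "(\<Sum>r\<in>I. card (F r)) \<le> M"
    using \<open>card I \<le> M\<close> by (simp add: F_def)
  moreover have "1 \<le> 2 * N + 1"
    by simp
  ultimately have "(\<exists>zs. sorted_wrt (<) zs \<and> set zs \<subseteq> L \<and> length zs = n \<and>
        (\<forall>r\<in>I. \<forall>v\<in>F r. branching (T r) (\<lambda>w. C w = cc r) zs v))
    \<or> (\<exists>r\<in>I. \<exists>v L'. v \<in> T r \<and> prefix (u r) v \<and> length v \<in> X \<and> L' \<subseteq> L \<and>
        (\<forall>y\<in>L'. length v < y) \<and> 2 * N + 1 \<le> card L' \<and>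
        (\<forall>y\<in>L'. card {t \<in> cone (T r) v y. C t = cc r} \<le> 1))"
    using branching_or_sparse_node[OF \<open>finite I\<close> \<open>finite X\<close>] \<open>L \<subseteq> X\<close> \<open>1 \<le> M\<close> L by blast
  then consider (branching) zs where "sorted_wrt (<) zs" "set zs \<subseteq> L" "length zs = n"
      "\<forall>r\<in>I. branching (T r) (\<lambda>w. C w = cc r) zs (u r)"
    | (sparse) r v L' where "r \<in> I" "v \<in> T r" "prefix (u r) v" "length v \<in> X" "L' \<subseteq> L"
      "\<forall>y\<in>L'. length v < y" "2 * N + 1 \<le> card L'" "\<forall>y\<in>L'. card {t \<in> cone (T r) v y. C t = cc r} \<le> 1"
    unfolding F_def by blast
  then show ?thesis
  proof cases
    case branching
    then show ?thesis
      by blast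
  next
    case sparse
    then have "L' \<subseteq> X" "2 * N \<le> card L'"
      using \<open>L \<subseteq> X\<close> by auto
    then obtain w B where "w \<in> T r" "prefix v w" "length w \<in> X" "B \<subseteq> L'" "N \<le> card B"
      "\<forall>y\<in>B. length w < y" "\<forall>y\<in>B. \<forall>t\<in>cone (T r) w y. C t \<noteq> cc r"
      using ex_node_avoiding_colour[OF _ \<open>finite X\<close> sparse(2,4) _ sparse(6) _ sparse(8)]
        q sparse(1) by blast
    moreover have "prefix (u r) w"
      using sparse(3) \<open>prefix v w\<close> by (rule prefix_order.trans)
    ultimately have "w \<in> T r \<and> prefix (u r) w \<and> length w \<in> X \<and> B \<subseteq> L \<and> N \<le> card B \<and>
        (\<forall>y\<in>B. length w < y) \<and> (\<forall>y\<in>B. \<forall>t\<in>cone (T r) w y. C t \<noteq> cc r)"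
      using sparse(5) by blast
    then show ?thesis
      using cc sparse(1) by blast
  qed
qed

lemma sum_card_remove_colour:
  assumes "finite I" "r \<in> I" "finite (K r)" "c \<in> K r"
  shows "(\<Sum>r'\<in>I. card ((K(r := K r - {c})) r')) + 1 = (\<Sum>r'\<in>I. card (K r'))"
proof -
  have "card (K r - {c}) + 1 = card (K r)"
    using assms(3,4) card_gt_0_iff[of "K r"] by auto
  moreover have "(\<Sum>r'\<in>I. card ((K(r := K r - {c})) r')) = card (K r - {c}) + (\<Sum>r'\<in>I - {r}. card (K r'))"
    using sum.remove[OF assms(1,2), of "\<lambda>r'. card ((K(r := K r - {c})) r')"] by simp
  moreover have "(\<Sum>r'\<in>I. card (K r')) = card (K r) + (\<Sum>r'\<in>I - {r}. card (K r'))"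
    using sum.remove[OF assms(1,2)] .
  ultimately show ?thesis
    by linarith
qed

fun superpersistence_levels :: "nat \<Rightarrow> nat \<Rightarrow> nat \<Rightarrow> nat" where
  "superpersistence_levels n M 0 = branching_levels 1 n M"
| "superpersistence_levels n M (Suc f) = branching_levels (2 * superpersistence_levels n M f + 1) n M"

lemma ex_monochromatic_branchings:
  fixes I :: "'i set" and T :: "'i \<Rightarrow> bool list set" and C :: "bool list \<Rightarrow> nat"
  assumes "finite I" "finite X" and q: "\<forall>r\<in>I. quasistrong X (T r)"
    and "1 \<le> n" "1 \<le> M" "card I \<le> M"
  shows "\<lbrakk>palette_invariant I X T C u K L; (\<Sum>r\<in>I. card (K r)) \<le> f;
      superpersistence_levels n M f \<le> card L\<rbrakk> \<Longrightarrow>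
    \<exists>zs. sorted_wrt (<) zs \<and> set zs \<subseteq> L \<and> length zs = n \<and>
       (\<forall>r\<in>I. \<exists>c. branching (T r) (\<lambda>w. C w = c) zs (u r))"
proof (induction f arbitrary: u K L)
  case 0
  have "branching_levels (2 * 0 + 1) n M \<le> card L"
    using "0.prems"(3) by simp
  from branching_or_colour_avoided[OF assms "0.prems"(1) this]
  show ?case
  proof (elim disjE bexE exE conjE)
    fix r c assume "r \<in> I" "c \<in> K r"
    moreover have "finite (K r)"
      using "0.prems"(1) \<open>r \<in> I\<close> by (simp add: palette_invariant_def)
    ultimately have "0 < card (K r)"
      using card_gt_0_iff by blast
    moreover have "card (K r) \<le> (\<Sum>r\<in>I. card (K r))"
      by (rule member_le_sum[OF \<open>r \<in> I\<close> _ \<open>finite I\<close>]) simp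
    ultimately show ?case
      using "0.prems"(2) by linarith
  qed blast
next
  case (Suc f)
  let ?N = "superpersistence_levels n M f"
  have "branching_levels (2 * ?N + 1) n M \<le> card L"
    using Suc.prems(3) by simp
  from branching_or_colour_avoided[OF assms Suc.prems(1) this]
  show ?case
  proof (elim disjE bexE exE conjE)
    fix r c w B assume r: "r \<in> I" "c \<in> K r" and w: "w \<in> T r" "prefix (u r) w" "length w \<in> X"
      and B: "B \<subseteq> L" "?N \<le> card B" "\<forall>y\<in>B. length w < y" "\<forall>y\<in>B. \<forall>t\<in>cone (T r) w y. C t \<noteq> c"
    let ?u = "u(r := w)" and ?K = "K(r := K r - {c})"
    have inv: "palette_invariant I X T C ?u ?K B"
      using palette_invariant_remove_colour[OF Suc.prems(1) r(1) w B(1,3,4)] .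
    have "finite (K r)"
      using Suc.prems(1) r(1) by (simp add: palette_invariant_def)
    then have "(\<Sum>r'\<in>I. card (?K r')) \<le> f"
      using sum_card_remove_colour[of I r K c, OF \<open>finite I\<close> r(1) _ r(2)] Suc.prems(2) by simp
    then obtain zs where zs: "sorted_wrt (<) zs" "set zs \<subseteq> B" "length zs = n"
      "\<forall>r'\<in>I. \<exists>c. branching (T r') (\<lambda>w. C w = c) zs (?u r')"
      using Suc.IH[OF inv _ B(2)] by blast
    have "\<exists>c. branching (T r') (\<lambda>w. C w = c) zs (u r')" if "r' \<in> I" for r'
    proof (cases "r' = r")
      case True
      then show ?thesis
        using zs(4) that w(2) branching_prefix by fastforce
    next
      case False
      then show ?thesis
        using zs(4) that by fastforce
    qed
    then show ?case
      using zs(1-3) B(1) by blast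
  qed blast
qed

lemma prehomogeneous_if_levels_monochromatic:
  assumes "sorted_wrt (<) (m # zs)" "\<forall>w\<in>S. length w \<in> set zs \<longrightarrow> C w = c"
  shows "prehomogeneous C (set (m # zs)) S"
  unfolding prehomogeneous_def
proof (intro exI[of _ c] allI impI ballI)
  fix x y s t
  assume xy: "consec (set (m # zs)) x y" and "s \<in> level S x" "t \<in> level S y" "prefix s t"
  then have "y \<in> set zs"
    using assms(1) unfolding consec_def by auto
  moreover have "t \<in> S" "length t = y"
    using \<open>t \<in> level S y\<close> by (simp_all add: level_def)
  ultimately have "C t = c"
    using assms(2) by blast
  then show "\<exists>z\<in>S. prefix s z \<and> prefix z t \<and> C z = c"
    using \<open>t \<in> S\<close> \<open>prefix s t\<close> by blast
qed

lemma ex_monochromatic_branchings_above_Min: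
  fixes T :: "bool list \<Rightarrow> bool list set" and C :: "bool list \<Rightarrow> nat"
  assumes "finite X" "X \<noteq> {}" and q: "\<forall>r. length r = Min X \<longrightarrow> quasistrong X (T r)"
    and C: "\<forall>s. C s < k" and "1 \<le> n"
    and card_X: "superpersistence_levels n (2 ^ Min X) (2 ^ Min X * k) < card X"
  shows "\<exists>zs. sorted_wrt (<) (Min X # zs) \<and> set zs \<subseteq> X \<and> length zs = n \<and>
    (\<forall>r. length r = Min X \<longrightarrow> (\<exists>u\<in>level (T r) (Min X). \<exists>c. branching (T r) (\<lambda>w. C w = c) zs u))"
proof -
  define m where "m = Min X"
  define I where "I = {r :: bool list. length r = m}"
  have I_eq: "I = {r. set r \<subseteq> UNIV \<and> length r = m}"
    unfolding I_def by simp
  have "finite I"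
    unfolding I_eq by (rule finite_lists_length_eq) simp
  have "card I = 2 ^ m"
    unfolding I_eq using card_lists_length_eq[of "UNIV :: bool set" m] by simp
  have "m \<in> X" "\<forall>x\<in>X. m \<le> x"
    using assms(1,2) by (simp_all add: m_def)
  have q': "\<forall>r\<in>I. quasistrong X (T r)"
    using q by (simp add: I_def m_def)
  define u where "u r = (SOME s. s \<in> level (T r) m)" for r
  have u: "u r \<in> level (T r) m" if "r \<in> I" for r
    using quasistrong_level_nonempty[OF bspec[OF q' that] \<open>m \<in> X\<close>] unfolding u_def
    by (simp add: some_in_eq)
  define L where "L = {y\<in>X. m < y}"
  have inv: "palette_invariant I X T C u (\<lambda>r. {..<k}) L"
    using u \<open>m \<in> X\<close> C by (auto simp: palette_invariant_def L_def level_def)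
  have palettes: "(\<Sum>r\<in>I. card {..<k}) \<le> 2 ^ m * k"
    using \<open>card I = 2 ^ m\<close> by simp
  have "X = insert m L" "m \<notin> L"
    using \<open>m \<in> X\<close> \<open>\<forall>x\<in>X. m \<le> x\<close> by (auto simp: L_def)
  then have "card X = Suc (card L)"
    using \<open>finite X\<close> by (metis card_insert_disjoint finite_insert)
  then have levels: "superpersistence_levels n (2 ^ m) (2 ^ m * k) \<le> card L"
    using card_X by (simp add: m_def)
  obtain zs where zs: "sorted_wrt (<) zs" "set zs \<subseteq> L" "length zs = n"
    "\<forall>r\<in>I. \<exists>c. branching (T r) (\<lambda>w. C w = c) zs (u r)"
    using ex_monochromatic_branchings[OF \<open>finite I\<close> \<open>finite X\<close> q' \<open>1 \<le> n\<close> _ _ inv palettes levels]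
      \<open>card I = 2 ^ m\<close> by auto
  have "sorted_wrt (<) (m # zs)" "set zs \<subseteq> X"
    using zs(1,2) by (auto simp: L_def)
  moreover have "\<exists>u\<in>level (T r) m. \<exists>c. branching (T r) (\<lambda>w. C w = c) zs u" if "length r = m" for r
    using u zs(4) that unfolding I_def by blast
  ultimately show ?thesis
    using zs(3) unfolding m_def by blast
qed

lemma superpersistent_if_card_gt:
  assumes "k < 2 ^ e" "1 \<le> e" "finite X" "X \<noteq> {}"
    and card_X: "superpersistence_levels (persistence_bound e (Min X) i) (2 ^ Min X) (2 ^ Min X * k) < card X"
  shows "superpersistent k i X"
  unfolding superpersistent_def
proof (intro allI impI)
  fix T :: "bool list \<Rightarrow> bool list set" and C :: "bool list \<Rightarrow> nat"
  assume q: "\<forall>r. length r = Min X \<longrightarrow> quasistrong X (T r)" and C: "\<forall>s. C s < k"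
  let ?n = "persistence_bound e (Min X) i"
  obtain zs where zs: "sorted_wrt (<) (Min X # zs)" "set zs \<subseteq> X" "length zs = ?n"
    "\<forall>r. length r = Min X \<longrightarrow> (\<exists>u\<in>level (T r) (Min X). \<exists>c. branching (T r) (\<lambda>w. C w = c) zs u)"
    using ex_monochromatic_branchings_above_Min[OF assms(3,4) q C persistence_bound_pos card_X] by blast
  let ?Y = "set (Min X # zs)"
  have "?Y \<subseteq> X"
    using zs(2) assms(3,4) by simp
  have "persistence_bound e (Min ?Y) i \<le> card ?Y"
    using Min_set_sorted_Cons[OF zs(1)] card_set_sorted[OF zs(1)] zs(3) by simp
  then have "persistent k i ?Y"
    using persistent_if_card_ge[OF assms(1,2)] by blast
  moreover have "\<exists>S. S \<subseteq> T r \<and> quasistrong ?Y S \<and> prehomogeneous C ?Y S" if r: "length r = Min X" for r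
  proof -
    obtain u c where u: "u \<in> level (T r) (Min X)" and c: "branching (T r) (\<lambda>w. C w = c) zs u"
      using zs(4) r by blast
    have "u \<in> T r" "length u = Min X"
      using u by (simp_all add: level_def)
    then obtain S where "S \<subseteq> T r" "quasistrong ?Y S" "\<forall>w\<in>S. length w \<in> set zs \<longrightarrow> C w = c"
      using quasistrong_subtree_of_branching[OF quasistrong_tree[OF q[rule_format, OF r]] _ _ c] zs(1)
      by auto
    then show ?thesis
      using prehomogeneous_if_levels_monochromatic[OF zs(1)] by blast
  qed
  then obtain S where "\<forall>r. length r = Min X \<longrightarrow> S r \<subseteq> T r \<and> quasistrong ?Y (S r) \<and> prehomogeneous C ?Y (S r)"
    by metis
  ultimately show "\<exists>Y\<subseteq>X. \<exists>S. persistent k i Y \<and>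
      (\<forall>r. length r = Min X \<longrightarrow> S r \<subseteq> T r \<and> quasistrong Y (S r) \<and> prehomogeneous C Y (S r))"
    using \<open>?Y \<subseteq> X\<close> by blast
qed

section \<open>The bounds\<close>

definition bit_length :: "nat \<Rightarrow> nat" where
  "bit_length k = (LEAST e. k < 2 ^ e)"

lemma less_two_power_bit_length: "k < 2 ^ bit_length k"
  unfolding bit_length_def by (rule LeastI[of _ k]) (rule less_exp)

lemma bit_length_least: "k < 2 ^ e \<Longrightarrow> bit_length k \<le> e"
  unfolding bit_length_def by (rule Least_le)

lemma bit_length_pos: "1 \<le> k \<Longrightarrow> 1 \<le> bit_length k"
  using less_two_power_bit_length[of k] by (cases "bit_length k") auto

lemma two_powi_neg_less_inverse_iff:
  assumes "1 \<le> k"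
  shows "(2::rat) powi (- e) < 1 / of_nat k \<longleftrightarrow> 0 \<le> e \<and> k < 2 ^ nat e"
proof (cases "0 \<le> e")
  case True
  then have "(2::rat) powi (- e) = 1 / 2 ^ nat e"
    by (simp add: power_int_minus_divide power_int_of_nat[symmetric])
  moreover have "(1::rat) / 2 ^ nat e < 1 / of_nat k \<longleftrightarrow> of_nat k < (2::rat) ^ nat e"
    using assms by (simp add: field_simps)
  ultimately show ?thesis
    using True by (metis of_nat_less_iff of_nat_numeral of_nat_power)
next
  case False
  then have "(2::rat) powi (- e) = 2 ^ nat (- e)"
    by (simp add: power_int_of_nat[symmetric])
  moreover have "(1::rat) \<le> 2 ^ nat (- e)" "1 / of_nat k \<le> (1::rat)"
    using assms by simp_all
  ultimately show ?thesis
    using False by linarith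
qed

lemma e_fn_inverse_nat:
  assumes "1 \<le> k"
  shows "e_fn (1 / of_nat k) = int (bit_length k)"
  unfolding e_fn_def
proof (rule the_equality)
  show "(2::rat) powi (- int (bit_length k)) < 1 / of_nat k \<and>
      (\<forall>e'. (2::rat) powi (- e') < 1 / of_nat k \<longrightarrow> int (bit_length k) \<le> e')"
    using less_two_power_bit_length[of k] bit_length_least[of k]
      two_powi_neg_less_inverse_iff[OF assms] by (metis int_nat_eq nat_int of_nat_0_le_iff of_nat_le_iff)
next
  fix e
  assume e: "(2::rat) powi (- e) < 1 / of_nat k \<and> (\<forall>e'. (2::rat) powi (- e') < 1 / of_nat k \<longrightarrow> e \<le> e')"
  then have "e \<le> int (bit_length k)"
    using two_powi_neg_less_inverse_iff[OF assms, of "int (bit_length k)"] less_two_power_bit_length[of k]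
    by simp
  moreover have "0 \<le> e" "bit_length k \<le> nat e"
    using e two_powi_neg_less_inverse_iff[OF assms, of e] bit_length_least[of k "nat e"] by auto
  ultimately show "e = int (bit_length k)"
    by linarith
qed

lemma branching_levels_le: "1 \<le> M \<Longrightarrow> branching_levels Q j M \<le> 2 ^ j * M * (Q + 1)"
proof -
  have "branching_levels Q j M + M * (Q + 1) \<le> 2 ^ j * M * (Q + 1)" if "1 \<le> M" for M
    using that
  proof (induction j arbitrary: M)
    case (Suc j)
    have "M * Q + 1 \<le> M * (Q + 1)"
      using Suc.prems by simp
    then have "branching_levels Q (Suc j) M + M * (Q + 1) \<le> branching_levels Q j (2 * M) + 2 * M * (Q + 1)"
      by simp
    also have "\<dots> \<le> 2 ^ j * (2 * M) * (Q + 1)"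
      using Suc.IH[of "2 * M"] Suc.prems by simp
    finally show ?case
      by simp
  qed simp
  then show "1 \<le> M \<Longrightarrow> branching_levels Q j M \<le> 2 ^ j * M * (Q + 1)"
    by fastforce
qed

lemma superpersistence_levels_le:
  assumes "1 \<le> n"
  shows "superpersistence_levels n (2 ^ m) f \<le> 2 ^ ((n + m + 2) * (f + 1))"
proof (induction f)
  case 0
  have "superpersistence_levels n (2 ^ m) 0 \<le> 2 ^ n * 2 ^ m * 2"
    using branching_levels_le[of "2 ^ m" 1 n] by simp
  also have "\<dots> \<le> 2 ^ ((n + m + 2) * (0 + 1))"
    by (simp add: power_add[symmetric])
  finally show ?case .
next
  case (Suc f)
  let ?N = "superpersistence_levels n (2 ^ m) f"
  have "1 \<le> ?N"
    using branching_levels_pos[OF assms] by (cases f) auto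
  have "superpersistence_levels n (2 ^ m) (Suc f) \<le> 2 ^ n * 2 ^ m * (2 * ?N + 2)"
    using branching_levels_le[of "2 ^ m" "2 * ?N + 1" n] by simp
  also have "\<dots> \<le> 2 ^ (n + m + 2) * ?N"
    using \<open>1 \<le> ?N\<close> by (simp add: power_add)
  also have "\<dots> \<le> 2 ^ (n + m + 2) * 2 ^ ((n + m + 2) * (f + 1))"
    using Suc.IH by simp
  also have "\<dots> = 2 ^ ((n + m + 2) * (Suc f + 1))"
    by (simp add: power_add[symmetric] algebra_simps)
  finally show ?case .
qed

lemma persistence_bound_le_gbar:
  assumes "1 \<le> k"
  shows "int (persistence_bound (bit_length k) m i) \<le> gbar m k i \<and> int m + int k + 1 \<le> gbar m k i"
proof (induction i)
  case (Suc i)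
  let ?e = "bit_length k" and ?g = "gbar m k i"
  have g: "gbar m k (Suc i) = (?g - 1) * int ?e + ((?g - 1) * ?g) div 2"
    by (simp add: g_fn_def e_fn_inverse_nat[OF assms])
  have "2 \<le> ?g"
    using Suc.IH assms by linarith
  then have "1 * 2 \<le> (?g - 1) * ?g"
    by (intro mult_mono) simp_all
  then have "1 \<le> ((?g - 1) * ?g) div 2"
    by simp
  moreover have "?g - 1 \<le> (?g - 1) * int ?e"
    using bit_length_pos[OF assms] \<open>2 \<le> ?g\<close> by (simp add: mult_le_cancel_left1)
  moreover have "int (persistence_bound ?e m (Suc i)) = (int (persistence_bound ?e m i) - 1) * int ?e + 1"
    using persistence_bound_pos[of ?e m i] by (simp add: of_nat_diff)
  moreover have "(int (persistence_bound ?e m i) - 1) * int ?e \<le> (?g - 1) * int ?e"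
    using Suc.IH by (simp add: mult_right_mono)
  ultimately show ?case
    using g Suc.IH by linarith
qed simp

lemma seven_mult_square_le_two_power: "1 \<le> G \<Longrightarrow> 7 * G * G \<le> (2::nat) ^ (5 * G)"
proof -
  assume "1 \<le> G"
  have "G * G \<le> 2 ^ G * 2 ^ G"
    using less_exp[of G] by (intro mult_mono) simp_all
  then have "G * G \<le> 2 ^ (2 * G)"
    by (simp add: power_add[symmetric] mult_2)
  moreover have "(7::nat) \<le> 2 ^ (3 * G)"
    using power_increasing[of 3 "3 * G" "2::nat"] \<open>1 \<le> G\<close> by simp
  ultimately have "7 * (G * G) \<le> 2 ^ (3 * G) * 2 ^ (2 * G)"
    by (intro mult_mono) simp_all
  also have "\<dots> = 2 ^ (5 * G)"
    by (simp add: power_add[symmetric])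
  finally show ?thesis
    by (simp add: mult.assoc)
qed

lemma hbar_eq_power:
  assumes "1 \<le> k"
  shows "hbar m g k = of_nat (2 ^ (bit_length k * 2 ^ m * 2 ^ nat (5 * g)) * k ^ 2 ^ m)"
proof -
  have "e_fn (1 / of_nat k) * 2 ^ m * 2 ^ nat (5 * g) = int (bit_length k * 2 ^ m * 2 ^ nat (5 * g))"
    using e_fn_inverse_nat[OF assms] by simp
  then show ?thesis
    unfolding hbar_def h_fn_def by (simp only: power_int_of_nat) simp
qed

lemma superpersistence_levels_less:
  assumes "1 \<le> k" and N: "hbar m (gbar m k i) k \<le> of_nat N"
  shows "superpersistence_levels (persistence_bound (bit_length k) m i) (2 ^ m) (2 ^ m * k) < N"
proof -
  let ?n = "persistence_bound (bit_length k) m i"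
  define G where "G = nat (gbar m k i)"
  have "?n \<le> G" "m \<le> G" "k \<le> G" "2 \<le> G" "nat (5 * gbar m k i) = 5 * G"
    using persistence_bound_le_gbar[OF assms(1), of m i] assms(1) unfolding G_def by linarith+
  have "1 \<le> 2 ^ m * G"
    using \<open>2 \<le> G\<close> by (simp add: Suc_le_eq)
  then have "2 ^ m * k + 1 \<le> 2 * 2 ^ m * G"
    using mult_le_mono2[OF \<open>k \<le> G\<close>, of "2 ^ m"] by linarith
  moreover have "?n + m + 2 \<le> 3 * G"
    using \<open>?n \<le> G\<close> \<open>m \<le> G\<close> \<open>2 \<le> G\<close> by linarith
  ultimately have "(?n + m + 2) * (2 ^ m * k + 1) \<le> (3 * G) * (2 * 2 ^ m * G)"
    by (intro mult_mono) simp_all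
  also have "\<dots> < 2 ^ m * (7 * G * G)"
    using \<open>1 \<le> 2 ^ m * G\<close> \<open>2 \<le> G\<close> by (simp add: algebra_simps)
  also have "\<dots> \<le> 2 ^ m * 2 ^ (5 * G)"
    using seven_mult_square_le_two_power[of G] \<open>2 \<le> G\<close> by simp
  finally have exponent: "(?n + m + 2) * (2 ^ m * k + 1) < 2 ^ m * 2 ^ (5 * G)" .
  have "superpersistence_levels ?n (2 ^ m) (2 ^ m * k) \<le> 2 ^ ((?n + m + 2) * (2 ^ m * k + 1))"
    using superpersistence_levels_le[OF persistence_bound_pos] .
  also have "\<dots> < 2 ^ (2 ^ m * 2 ^ (5 * G))"
    using exponent by (intro power_strict_increasing) simp_all
  also have "\<dots> \<le> 2 ^ (bit_length k * 2 ^ m * 2 ^ (5 * G))"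
    using bit_length_pos[OF assms(1)] by (intro power_increasing) simp_all
  also have "\<dots> \<le> 2 ^ (bit_length k * 2 ^ m * 2 ^ (5 * G)) * k ^ 2 ^ m"
    using assms(1) by simp
  also have "\<dots> \<le> N"
    using N hbar_eq_power[OF assms(1)] \<open>nat (5 * gbar m k i) = 5 * G\<close> by (metis of_nat_le_iff)
  finally show ?thesis .
qed

theorem lemma2p18:
  fixes k i :: nat and X :: "nat set"
  assumes "k \<ge> 1" and "finite X" and "X \<noteq> {}"
    and "of_nat (card X) \<ge> hbar (Min X) (gbar (Min X) k i) k"
  shows "superpersistent k i X"
  using superpersistent_if_card_gt[OF less_two_power_bit_length bit_length_pos[OF assms(1)] assms(2,3)]
    superpersistence_levels_less[OF assms(1,4)] .

end
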